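(* For every $t=0,1,\dots,T-2$ and every $x\in\mathbb R$, $$\bar\omega_t(x)\le\bar\psi_t(\theta,S^U_t)+\bar\psi_t\big(\theta,\max(x,S^U_t)\big)-\gamma_t\theta+\alpha\,\bar\omega_{t+1}\big(\theta+\max(x,S^U_t)\big).$$
   Context: Model. Fix an integer horizon $T\ge 2$, a discount factor $\alpha\in(0,1]$, and for $t=0,\dots,T-1$: unit ordering costs $c_t\in\mathbb R$, a salvage coefficient $c_T\in\mathbb R$, setup costs $K_t\ge 0$, functions $G_t:\mathbb R\to\mathbb R$, and independent nonnegative random demands $D_0,\dots,D_{T-1}$ with right-continuous distribution functions $F_t$ and finite means; all expectations appearing are assumed finite. Put $C_t(y)=(c_t-\alpha c_{t+1})y+G_t(y)+\alpha c_{t+1}E[D_t]$. Standing assumptions: (i) each $C_t$ is convex with $C_t(y)\to+\infty$ as $|y|\to\infty$; (ii) $K_t\ge \alpha K_{t+1}$ for $t=0,\dots,T-2$; (iii) there are constants $\gamma_t\ge 0$ with $|C_t(x)-C_t(y)|\le\gamma_t|x-y|$ for all $x,y$. Grid construction. Fix $\theta>0$, $z_m=m\theta$, $Z_\theta=\{z_m:m\in\mathbb Z\}$, $f_t(n)=F_t(z_{n+1})-F_t(z_n)$ ($n\ge -1$). $C^m_t=\min\{y: C_t(y)=\min_x C_t(x)\}$; with $z_{n_0}<C^m_t\le z_{n_0+1}$, $S^U_t=\min\{z_m\in Z_\theta: z_m\ge C^m_t,\ C_t(z_m)>C_t(z_{n_0})+K_t\}$. $s_{T-1}$ is a point with $s_{T-1}\le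 C^m_{T-1}$, $C_{T-1}(s_{T-1})=C_{T-1}(C^m_{T-1})+K_{T-1}$; $\bar I_{T-1}=s_{T-1}$. For $t=T-2,\dots,0$: $I_t=\max\{z_m\in Z_\theta: z_m<\min(\bar I_{t+1}-\theta,C^m_t)\}$, $\bar I_t=\max\{z_m\in Z_\theta: z_m\le I_t,\ C_t(z_m)>C_t(I_t)+K_t\}+\theta$. $H_{T-1}=C_{T-1}$, $S_{T-1}=C^m_{T-1}$; $V_t(y)=H_t(S_t)+K_t$ for $y<s_t$, $V_t(y)=H_t(y)$ for $y\ge s_t$. For $t=T-2,\dots,0$: $H_t(y)=C_t(y)+\alpha\sum_{n=-1}^\infty V_{t+1}(y-z_n)f_t(n)$; $S_t=\max\{z_m\in Z_\theta: I_t\le z_m\le S^U_t,\ H_t(z_m)=\min\{H_t(z_n):z_n\in Z_\theta, I_t\le z_n\le S^U_t\}\}$; $s_t=S_t$ if $K_t=0$, else $s_t=\min\{z_m\in Z_\theta:\bar I_t\le z_m\le S_t,\ H_t(z_m)\le H_t(S_t)+K_t\}$. Estimate functions. $\psi_{T-1}(x,y)=\bar\psi_{T-1}(x,y)=\gamma_{T-1}x$; $\varphi_{T-1}(x,y)=\bar\varphi_{T-1}(x,y)=0$ if $y<s_{T-1}$ and $=\gamma_{T-1}x$ if $y\ge s_{T-1}$. For $t=0,\dots,T-2$, with $n$ the integer such that $z_{n-1}\le y-s_{t+1}<z_n$: $\psi_t(x,y)=\gamma_tx$ if $y<s_{t+1}-\theta$, else $\psi_t(x,y)=\gamma_tx+\alpha\sum_{m=-1}^{n-1}\varphi_{t+1}(x,y-z_m)f_t(m)$;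 $\varphi_t(x,y)=0$ if $y<s_t$, $=\psi_t(y-s_t,y)$ if $y\ge s_t$ and $y-x<s_t$, $=\psi_t(x,y)$ if $y\ge s_t$ and $y-x\ge s_t$. Likewise $\bar\psi_t(x,y)=\gamma_tx$ if $y<s_{t+1}-\theta$, else $\bar\psi_t(x,y)=\gamma_tx+\alpha\sum_{m=-1}^{n-1}\bar\varphi_{t+1}(x,y-z_m)f_t(m)$; $\bar\varphi_t(x,y)=0$ if $y<s_t$, $=\bar\psi_t(y-s_t+\theta,y)$ if $y\ge s_t$ and $y-x<s_t$, $=\bar\psi_t(x,y)$ if $y\ge s_t$ and $y-x\ge s_t$. Error-bound functions. $\omega_{T-1}\equiv\bar\omega_{T-1}\equiv 0$, $\eta_{T-1}=0$. For $t=T-2,\dots,0$: $\omega_t(x)=\psi_t(\theta,x)-\gamma_t\theta+\alpha\sum_{n=-1}^\infty\bar\omega_{t+1}(x-z_n)f_t(n)$; $\eta_t=\bar\psi_t(\theta,S^U_t)+\omega_t(S^U_t)$; $\bar\omega_t(x)=\eta_t$ if $x\le S^U_t$ and $\bar\omega_t(x)=\max(\eta_t,\omega_t(x))$ if $x>S^U_t$. *)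

theory Defs
  imports "HOL-Probability.Probability"
begin

text \<open>Periods are t = 0,...,T-1; cost c_T is the salvage
coefficient.  The demand D_t is given through its distribution, a probability
measure on the reals; F_t is its distribution function.\<close>

record invmodel =
  Hor   :: nat
  disc  :: real
  cost  :: "nat \<Rightarrow> real"           (* c_t, t = 0..T *)
  Kc    :: "nat \<Rightarrow> real"
  Gf    :: "nat \<Rightarrow> real \<Rightarrow> real"
  dem   :: "nat \<Rightarrow> real measure"
  theta :: real
  gam   :: "nat \<Rightarrow> real"

definition EDem :: "invmodel \<Rightarrow> nat \<Rightarrow> real" where
  "EDem P t = integral\<^sup>L (dem P t) (\<lambda>x. x)"

definition Fd :: "invmodel \<Rightarrow> nat \<Rightarrow> real \<Rightarrow> real" where
  "Fd P t x = measure (dem P t) {..x}"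

definition Cf :: "invmodel \<Rightarrow> nat \<Rightarrow> real \<Rightarrow> real" where
  "Cf P t y = (cost P t - disc P * cost P (Suc t)) * y + Gf P t y
              + disc P * cost P (Suc t) * EDem P t"

definition zg :: "invmodel \<Rightarrow> int \<Rightarrow> real" where
  "zg P m = real_of_int m * theta P"

definition fd :: "invmodel \<Rightarrow> nat \<Rightarrow> int \<Rightarrow> real" where
  "fd P t n = Fd P t (zg P (n + 1)) - Fd P t (zg P n)"

definition Cmin :: "invmodel \<Rightarrow> nat \<Rightarrow> real" where
  "Cmin P t = Inf {y. Cf P t y = Inf (range (Cf P t))}"

definition n0 :: "invmodel \<Rightarrow> nat \<Rightarrow> int" where
  "n0 P t = (THE n. zg P n < Cmin P t \<and> Cmin P t \<le> zg P (n + 1))"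

definition SU :: "invmodel \<Rightarrow> nat \<Rightarrow> real" where
  "SU P t = zg P (LEAST m. zg P m \<ge> Cmin P t \<and>
                       Cf P t (zg P m) > Cf P t (zg P (n0 P t)) + Kc P t)"

definition sT1 :: "invmodel \<Rightarrow> real" where
  "sT1 P = (SOME s. s \<le> Cmin P (Hor P - 1) \<and>
      Cf P (Hor P - 1) s = Cf P (Hor P - 1) (Cmin P (Hor P - 1)) + Kc P (Hor P - 1))"

text \<open>I_t computed from \<open>Ib'\<close> = bar I_{t+1}.\<close>
definition gridI :: "invmodel \<Rightarrow> nat \<Rightarrow> real \<Rightarrow> real" where
  "gridI P t Ib' = zg P (GREATEST m. zg P m < min (Ib' - theta P) (Cmin P t))"

text \<open>The sum over n = -1,0,1,... is written as a series over k :: nat with n = k - 1.\<close>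

function stage :: "invmodel \<Rightarrow> nat \<Rightarrow> real \<times> (real \<Rightarrow> real) \<times> real \<times> real" where
  "stage P t =
     (if Hor P - 1 \<le> t then (sT1 P, Cf P t, Cmin P t, sT1 P)
      else
       (let st = stage P (Suc t);
            Ib' = fst st; H' = fst (snd st); S' = fst (snd (snd st)); s' = snd (snd (snd st));
            V' = (\<lambda>y. if y < s' then H' S' + Kc P (Suc t) else H' y);
            I = gridI P t Ib';
            Ib = zg P (GREATEST m. zg P m \<le> I \<and> Cf P t (zg P m) > Cf P t I + Kc P t) + theta P;
            H = (\<lambda>y. Cf P t y + disc P *
                   (\<Sum>k. V' (y - zg P (int k - 1)) * fd P t (int k - 1)));
            A = {m. I \<le> zg P m \<and> zg P m \<le> SU P t};
            S = zg P (GREATEST m. m \<in> A \<and> H (zg P m) = Min ((\<lambda>n. H (zg P n)) ` A));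
            s = (if Kc P t = 0 then S
                 else zg P (LEAST m. Ib \<le> zg P m \<and> zg P m \<le> S \<and> H (zg P m) \<le> H S + Kc P t))
        in (Ib, H, S, s)))"
  by pat_completeness auto
termination by (relation "Wellfounded.measure (\<lambda>(P, t). Hor P - t)") auto

definition Ibar :: "invmodel \<Rightarrow> nat \<Rightarrow> real" where "Ibar P t = fst (stage P t)"
definition Hf :: "invmodel \<Rightarrow> nat \<Rightarrow> real \<Rightarrow> real" where "Hf P t = fst (snd (stage P t))"
definition Sf :: "invmodel \<Rightarrow> nat \<Rightarrow> real" where "Sf P t = fst (snd (snd (stage P t)))"
definition sf :: "invmodel \<Rightarrow> nat \<Rightarrow> real" where "sf P t = snd (snd (snd (stage P t)))"
definition If :: "invmodel \<Rightarrow> nat \<Rightarrow> real" where "If P t = gridI P t (Ibar P (Suc t))"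

text \<open>One step of psi_t (t \<le> T-2), given g = phi_{t+1}; n is the integer with
  z_{n-1} \<le> y - s_{t+1} < z_n.\<close>
definition psi_step :: "invmodel \<Rightarrow> nat \<Rightarrow> (real \<Rightarrow> real \<Rightarrow> real) \<Rightarrow> real \<Rightarrow> real \<Rightarrow> real" where
  "psi_step P t g x y =
     (if y < sf P (Suc t) - theta P then gam P t * x
      else (let n = (THE n::int. zg P (n - 1) \<le> y - sf P (Suc t) \<and> y - sf P (Suc t) < zg P n)
            in gam P t * x + disc P * (\<Sum>m\<in>{-1..n-1}. g x (y - zg P m) * fd P t m)))"

function phi :: "invmodel \<Rightarrow> nat \<Rightarrow> real \<Rightarrow> real \<Rightarrow> real" where
  "phi P t x y =
     (if Hor P - 1 \<le> t then (if y < sf P t then 0 else gam P t * x)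
      else (if y < sf P t then 0
            else if y - x < sf P t then psi_step P t (phi P (Suc t)) (y - sf P t) y
            else psi_step P t (phi P (Suc t)) x y))"
  by pat_completeness auto
termination by (relation "Wellfounded.measure (\<lambda>(P, t, x, y). Hor P - t)") auto

definition psi :: "invmodel \<Rightarrow> nat \<Rightarrow> real \<Rightarrow> real \<Rightarrow> real" where
  "psi P t x y = (if Hor P - 1 \<le> t then gam P t * x else psi_step P t (phi P (Suc t)) x y)"

function phib :: "invmodel \<Rightarrow> nat \<Rightarrow> real \<Rightarrow> real \<Rightarrow> real" where
  "phib P t x y =
     (if Hor P - 1 \<le> t then (if y < sf P t then 0 else gam P t * x)
      else (if y < sf P t then 0
            else if y - x < sf P t then psi_step P t (phib P (Suc t)) (y - sf P t + theta P) y
            else psi_step P t (phib P (Suc t)) x y))"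
  by pat_completeness auto
termination by (relation "Wellfounded.measure (\<lambda>(P, t, x, y). Hor P - t)") auto

definition psib :: "invmodel \<Rightarrow> nat \<Rightarrow> real \<Rightarrow> real \<Rightarrow> real" where
  "psib P t x y = (if Hor P - 1 \<le> t then gam P t * x else psi_step P t (phib P (Suc t)) x y)"

text \<open>omega_t for t \<le> T-2 given g = bar omega_{t+1}.\<close>
definition omega_step :: "invmodel \<Rightarrow> nat \<Rightarrow> (real \<Rightarrow> real) \<Rightarrow> real \<Rightarrow> real" where
  "omega_step P t g x = psi P t (theta P) x - gam P t * theta P
      + disc P * (\<Sum>k. g (x - zg P (int k - 1)) * fd P t (int k - 1))"

function omegab :: "invmodel \<Rightarrow> nat \<Rightarrow> real \<Rightarrow> real" where
  "omegab P t x =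
     (if Hor P - 1 \<le> t then 0
      else (let om = omega_step P t (omegab P (Suc t));
                eta = psib P t (theta P) (SU P t) + om (SU P t)
            in if x \<le> SU P t then eta else max eta (om x)))"
  by pat_completeness auto
termination by (relation "Wellfounded.measure (\<lambda>(P, t, x). Hor P - t)") auto

definition omega :: "invmodel \<Rightarrow> nat \<Rightarrow> real \<Rightarrow> real" where
  "omega P t x = (if Hor P - 1 \<le> t then 0 else omega_step P t (omegab P (Suc t)) x)"

definition eta :: "invmodel \<Rightarrow> nat \<Rightarrow> real" where
  "eta P t = (if Hor P - 1 \<le> t then 0 else psib P t (theta P) (SU P t) + omega P t (SU P t))"

definition model_ok :: "invmodel \<Rightarrow> bool" where
  "model_ok P \<longleftrightarrow>
     Hor P \<ge> 2 \<and> 0 < disc P \<and> disc P \<le> 1 \<and> theta P > 0 \<and>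
     (\<forall>t < Hor P.
        Kc P t \<ge> 0 \<and>
        prob_space (dem P t) \<and> sets (dem P t) = sets borel \<and>
        (AE x in dem P t. 0 \<le> x) \<and> integrable (dem P t) (\<lambda>x. x) \<and>
        convex_on UNIV (Cf P t) \<and>
        filterlim (Cf P t) at_top at_top \<and> filterlim (Cf P t) at_top at_bot \<and>
        gam P t \<ge> 0 \<and> (\<forall>x y. \<bar>Cf P t x - Cf P t y\<bar> \<le> gam P t * \<bar>x - y\<bar>)) \<and>
     (\<forall>t. t + 2 \<le> Hor P \<longrightarrow> Kc P t \<ge> disc P * Kc P (Suc t))"

end

theory Submission
  imports Defs
begin

text \<open>Since \<omega>-bar_{t+1} is nonnegative and nondecreasing, and the grid weights f_t(n), n \<ge> -1,
  sum to at most 1 with z_{-1} = -\<theta>, the expectation term of \<omega>_t(y) is at most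
  \<omega>-bar_{t+1}(y + \<theta>).  Combined with \<psi>_t(\<theta>, y) \<le> \<psi>-bar_t(\<theta>, y') for y \<le> y', this bounds
  both branches of the definition of \<omega>-bar_t.  The comparison of \<psi> with \<psi>-bar, their
  monotonicity and the lower bound \<gamma>_t x come from one backward induction over the stages:
  the \<phi>'s vanish below s_{t+1}, so \<psi>_t is a finite sum that can be compared termwise, and
  \<phi>_t inherits these properties from \<psi>_t.\<close>

context
  fixes P :: invmodel
  assumes theta_pos: "0 < theta P"
begin

lemma zg_mono: "m \<le> n \<Longrightarrow> zg P m \<le> zg P n"
  using theta_pos by (simp add: zg_def mult_right_mono)

lemma zg_less_iff: "zg P m < zg P n \<longleftrightarrow> m < n"
  using theta_pos by (simp add: zg_def)

definition grid_index :: "real \<Rightarrow> int" where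
  "grid_index d = \<lfloor>d / theta P\<rfloor> + 1"

lemma less_zg_grid_index: "d < zg P (grid_index d)"
proof -
  have "d / theta P < of_int (\<lfloor>d / theta P\<rfloor> + 1)" by linarith
  then show ?thesis using theta_pos by (simp add: zg_def grid_index_def field_simps)
qed

lemma zg_grid_index_le: "zg P (grid_index d - 1) \<le> d"
proof -
  have "of_int \<lfloor>d / theta P\<rfloor> * theta P \<le> d / theta P * theta P"
    using theta_pos by (intro mult_right_mono) linarith+
  then show ?thesis using theta_pos by (simp add: zg_def grid_index_def)
qed

lemma the_grid_index: "(THE n. zg P (n - 1) \<le> d \<and> d < zg P n) = grid_index d"
proof (rule the_equality)
  fix n assume "zg P (n - 1) \<le> d \<and> d < zg P n"
  then have "of_int (n - 1) \<le> d / theta P" "d / theta P < of_int n"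
    using theta_pos by (auto simp: zg_def field_simps)
  then have "\<lfloor>d / theta P\<rfloor> = n - 1" by (intro floor_unique) auto
  then show "n = grid_index d" by (simp add: grid_index_def)
qed (simp add: less_zg_grid_index zg_grid_index_le)

end

declare phi.simps[simp del] phib.simps[simp del] omegab.simps[simp del]

context
  fixes P :: invmodel
  assumes model: "model_ok P"
begin

lemma theta_pos: "0 < theta P"
  using model by (simp add: model_ok_def)

lemma disc_pos: "0 < disc P"
  using model by (simp add: model_ok_def)

lemma gam_nonneg: "t < Hor P \<Longrightarrow> 0 \<le> gam P t"
  using model by (simp add: model_ok_def)

lemma Fd_bounds:
  assumes "t < Hor P"
  shows "0 \<le> Fd P t a" "Fd P t a \<le> 1" "a \<le> b \<Longrightarrow> Fd P t a \<le> Fd P t b"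
proof -
  have prob: "prob_space (dem P t)" and borel: "sets (dem P t) = sets borel"
    using model assms by (auto simp: model_ok_def)
  show "0 \<le> Fd P t a" by (simp add: Fd_def)
  show "Fd P t a \<le> 1" unfolding Fd_def using prob_space.prob_le_1[OF prob] by blast
  show "Fd P t a \<le> Fd P t b" if "a \<le> b"
    unfolding Fd_def
    using finite_measure.finite_measure_mono[OF prob_space.axioms(1)[OF prob], of "{..a}" "{..b}"]
      borel that
    by auto
qed

lemma fd_nonneg: "t < Hor P \<Longrightarrow> 0 \<le> fd P t m"
  unfolding fd_def using Fd_bounds(3)[of t "zg P m" "zg P (m + 1)"] zg_mono[OF theta_pos, of m "m + 1"]
  by simp

lemma sum_fd_le_1:
  assumes "t < Hor P"
  shows "(\<Sum>k<n. fd P t (int k - 1)) \<le> 1"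
proof -
  have "(\<Sum>k<n. fd P t (int k - 1))
      = (\<Sum>k<n. Fd P t (zg P (int (Suc k) - 1)) - Fd P t (zg P (int k - 1)))"
    by (simp add: fd_def)
  also have "\<dots> = Fd P t (zg P (int n - 1)) - Fd P t (zg P (int 0 - 1))"
    by (rule sum_lessThan_telescope)
  also have "\<dots> \<le> 1"
    using Fd_bounds(1,2)[OF assms] by (smt (verit))
  finally show ?thesis .
qed

lemma summable_fd: "t < Hor P \<Longrightarrow> summable (\<lambda>k. fd P t (int k - 1))"
  by (rule summableI_nonneg_bounded[where x = 1]) (auto intro: fd_nonneg sum_fd_le_1)

lemma suminf_fd_le_1: "t < Hor P \<Longrightarrow> (\<Sum>k. fd P t (int k - 1)) \<le> 1"
  by (rule suminf_le_const) (auto intro: summable_fd sum_fd_le_1)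

definition grid_expect :: "nat \<Rightarrow> (real \<Rightarrow> real) \<Rightarrow> real \<Rightarrow> real" where
  "grid_expect t g x = (\<Sum>k. g (x - zg P (int k - 1)) * fd P t (int k - 1))"

lemma omega_step_eq:
  "omega_step P t g x = psi P t (theta P) x - gam P t * theta P + disc P * grid_expect t g x"
  by (simp add: omega_step_def grid_expect_def)

lemma diff_zg_le: "x - zg P (int k - 1) \<le> x + theta P"
  using zg_mono[OF theta_pos, of "-1" "int k - 1"] by (simp add: zg_def)

lemma summable_grid_expect:
  assumes t: "t < Hor P" and g_nonneg: "\<And>y. 0 \<le> g y" and g_mono: "mono g"
  shows "summable (\<lambda>k. g (x - zg P (int k - 1)) * fd P t (int k - 1))"
proof (rule summable_comparison_test)
  show "summable (\<lambda>k. g (x + theta P) * fd P t (int k - 1))"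
    by (intro summable_mult summable_fd t)
  show "\<exists>N. \<forall>k\<ge>N. norm (g (x - zg P (int k - 1)) * fd P t (int k - 1))
                     \<le> g (x + theta P) * fd P t (int k - 1)"
    using g_nonneg fd_nonneg[OF t] monoD[OF g_mono diff_zg_le]
    by (auto intro!: mult_right_mono)
qed

lemma grid_expect_nonneg:
  assumes "t < Hor P" "\<And>y. 0 \<le> g y" "mono g"
  shows "0 \<le> grid_expect t g x"
  unfolding grid_expect_def
  by (intro suminf_nonneg summable_grid_expect mult_nonneg_nonneg fd_nonneg assms)

lemma grid_expect_mono:
  assumes "t < Hor P" "\<And>y. 0 \<le> g y" "mono g" and "x \<le> x'"
  shows "grid_expect t g x \<le> grid_expect t g x'"
  unfolding grid_expect_def using assms
  by (intro suminf_le summable_grid_expect mult_right_mono monoD[OF \<open>mono g\<close>] fd_nonneg) auto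

text \<open>The shift by \<theta> comes from the first grid point z_{-1} = -\<theta>.\<close>
lemma grid_expect_le_shift:
  assumes t: "t < Hor P" and g_nonneg: "\<And>y. 0 \<le> g y" and g_mono: "mono g"
  shows "grid_expect t g x \<le> g (x + theta P)"
proof -
  have "grid_expect t g x \<le> (\<Sum>k. g (x + theta P) * fd P t (int k - 1))"
    unfolding grid_expect_def using assms
    by (intro suminf_le summable_grid_expect summable_mult summable_fd mult_right_mono
        monoD[OF g_mono diff_zg_le] fd_nonneg)
  also have "\<dots> = g (x + theta P) * (\<Sum>k. fd P t (int k - 1))"
    by (intro suminf_mult summable_fd t)
  also have "\<dots> \<le> g (x + theta P)"
    using mult_left_mono[OF suminf_fd_le_1[OF t] g_nonneg] by simp
  finally show ?thesis .
qed

lemma psi_step_eq_sum: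
  assumes g_below: "\<And>x y'. y' < sf P (Suc t) \<Longrightarrow> g x y' = 0"
    and N: "y - sf P (Suc t) < zg P N"
  shows "psi_step P t g x y = gam P t * x + disc P * (\<Sum>m\<in>{-1..N-1}. g x (y - zg P m) * fd P t m)"
proof (cases "y < sf P (Suc t) - theta P")
  case True
  have "(\<Sum>m\<in>{-1..N-1}. g x (y - zg P m) * fd P t m) = 0"
  proof (rule sum.neutral, intro ballI)
    fix m assume "m \<in> {-1..N-1}"
    then have "zg P (-1) \<le> zg P m" by (intro zg_mono[OF theta_pos]) auto
    then have "y - zg P m < sf P (Suc t)" using True by (simp add: zg_def)
    then show "g x (y - zg P m) * fd P t m = 0" using g_below by simp
  qed
  then show ?thesis using True by (simp add: psi_step_def)
next
  case False
  define n where "n = grid_index P (y - sf P (Suc t))"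
  have "zg P (n - 1) < zg P N"
    using zg_grid_index_le[OF theta_pos] N unfolding n_def by (meson le_less_trans)
  then have n_le_N: "n \<le> N" by (simp add: zg_less_iff[OF theta_pos])
  have "(\<Sum>m\<in>{-1..n-1}. g x (y - zg P m) * fd P t m) = (\<Sum>m\<in>{-1..N-1}. g x (y - zg P m) * fd P t m)"
  proof (rule sum.mono_neutral_left)
    show "\<forall>m\<in>{-1..N-1} - {-1..n-1}. g x (y - zg P m) * fd P t m = 0"
    proof
      fix m assume "m \<in> {-1..N-1} - {-1..n-1}"
      then have "zg P n \<le> zg P m" by (intro zg_mono[OF theta_pos]) auto
      then have "y - zg P m < sf P (Suc t)"
        using less_zg_grid_index[OF theta_pos] unfolding n_def by (smt (verit))
      then show "g x (y - zg P m) * fd P t m = 0" using g_below by simp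
    qed
  qed (use n_le_N in auto)
  then show ?thesis
    using False by (simp add: psi_step_def the_grid_index[OF theta_pos] n_def Let_def)
qed

text \<open>Monotonicity of one backward step: since both integrands vanish below s_{t+1}, both
  sums may be taken over the same finite index range and compared termwise.\<close>
lemma psi_step_mono:
  assumes g_below: "\<And>x y'. y' < sf P (Suc t) \<Longrightarrow> g x y' = 0"
    and h_below: "\<And>x y'. y' < sf P (Suc t) \<Longrightarrow> h x y' = 0"
    and t: "t < Hor P" and "y1 \<le> y2"
    and gh: "\<And>m. -1 \<le> m \<Longrightarrow> g x1 (y1 - zg P m) \<le> h x2 (y2 - zg P m)"
    and "gam P t * x1 \<le> gam P t * x2"
  shows "psi_step P t g x1 y1 \<le> psi_step P t h x2 y2"
proof -
  define N where "N = grid_index P (y2 - sf P (Suc t))"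
  have N2: "y2 - sf P (Suc t) < zg P N"
    unfolding N_def by (rule less_zg_grid_index[OF theta_pos])
  then have N1: "y1 - sf P (Suc t) < zg P N" using \<open>y1 \<le> y2\<close> by linarith
  have "(\<Sum>m\<in>{-1..N-1}. g x1 (y1 - zg P m) * fd P t m) \<le> (\<Sum>m\<in>{-1..N-1}. h x2 (y2 - zg P m) * fd P t m)"
    by (intro sum_mono mult_right_mono gh fd_nonneg t) auto
  then have "disc P * (\<Sum>m\<in>{-1..N-1}. g x1 (y1 - zg P m) * fd P t m)
           \<le> disc P * (\<Sum>m\<in>{-1..N-1}. h x2 (y2 - zg P m) * fd P t m)"
    using disc_pos by (intro mult_left_mono) auto
  moreover have "psi_step P t g x1 y1
      = gam P t * x1 + disc P * (\<Sum>m\<in>{-1..N-1}. g x1 (y1 - zg P m) * fd P t m)"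
    using g_below N1 by (rule psi_step_eq_sum)
  moreover have "psi_step P t h x2 y2
      = gam P t * x2 + disc P * (\<Sum>m\<in>{-1..N-1}. h x2 (y2 - zg P m) * fd P t m)"
    using h_below N2 by (rule psi_step_eq_sum)
  ultimately show ?thesis using assms(6) by linarith
qed

lemma psi_step_ge:
  assumes g_below: "\<And>x y'. y' < sf P (Suc t) \<Longrightarrow> g x y' = 0"
    and t: "t < Hor P" and g_nonneg: "\<And>y. 0 \<le> g x y"
  shows "gam P t * x \<le> psi_step P t g x y"
proof -
  define N where "N = grid_index P (y - sf P (Suc t))"
  have N: "y - sf P (Suc t) < zg P N"
    unfolding N_def by (rule less_zg_grid_index[OF theta_pos])
  have "0 \<le> (\<Sum>m\<in>{-1..N-1}. g x (y - zg P m) * fd P t m)"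
    by (intro sum_nonneg mult_nonneg_nonneg g_nonneg fd_nonneg t)
  moreover have "psi_step P t g x y
      = gam P t * x + disc P * (\<Sum>m\<in>{-1..N-1}. g x (y - zg P m) * fd P t m)"
    using g_below N by (rule psi_step_eq_sum)
  ultimately show ?thesis using disc_pos by simp
qed

lemma phi_below: "y < sf P t \<Longrightarrow> phi P t x y = 0"
  by (subst phi.simps) simp

lemma phib_below: "y < sf P t \<Longrightarrow> phib P t x y = 0"
  by (subst phib.simps) simp

lemma phi_eq: "\<not> Hor P - 1 \<le> t \<Longrightarrow>
    phi P t x y = (if y < sf P t then 0 else psi P t (min x (y - sf P t)) y)"
  by (subst phi.simps) (simp add: psi_def min_def)

lemma phib_eq: "\<not> Hor P - 1 \<le> t \<Longrightarrow>
    phib P t x y = (if y < sf P t then 0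
                    else if y - x < sf P t then psib P t (y - sf P t + theta P) y
                    else psib P t x y)"
  by (subst phib.simps) (simp add: psib_def)

definition phi_props :: "nat \<Rightarrow> bool" where
  "phi_props t \<longleftrightarrow>
    (\<forall>x y. 0 \<le> x \<longrightarrow> 0 \<le> phi P t x y \<and> 0 \<le> phib P t x y) \<and>
    (\<forall>x1 x2 y. 0 \<le> x1 \<longrightarrow> x1 \<le> x2 \<longrightarrow> phi P t x1 y \<le> phi P t x2 y \<and> phib P t x1 y \<le> phib P t x2 y) \<and>
    (\<forall>x y1 y2. 0 \<le> x \<longrightarrow> y1 \<le> y2 \<longrightarrow> phi P t x y1 \<le> phi P t x y2) \<and>
    (\<forall>y1 y2. y1 \<le> y2 \<longrightarrow> phi P t (theta P) y1 \<le> phib P t (theta P) y2)"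

definition psi_props :: "nat \<Rightarrow> bool" where
  "psi_props t \<longleftrightarrow>
    (\<forall>x y. 0 \<le> x \<longrightarrow> gam P t * x \<le> psi P t x y \<and> gam P t * x \<le> psib P t x y) \<and>
    (\<forall>x1 x2 y. 0 \<le> x1 \<longrightarrow> x1 \<le> x2 \<longrightarrow> psi P t x1 y \<le> psi P t x2 y \<and> psib P t x1 y \<le> psib P t x2 y) \<and>
    (\<forall>x y1 y2. 0 \<le> x \<longrightarrow> y1 \<le> y2 \<longrightarrow> psi P t x y1 \<le> psi P t x y2) \<and>
    (\<forall>y1 y2. y1 \<le> y2 \<longrightarrow> psi P t (theta P) y1 \<le> psib P t (theta P) y2)"

lemma phi_propsD:
  assumes "phi_props t"
  shows "\<And>x y. 0 \<le> x \<Longrightarrow> 0 \<le> phi P t x y"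
    and "\<And>x y. 0 \<le> x \<Longrightarrow> 0 \<le> phib P t x y"
    and "\<And>x1 x2 y. 0 \<le> x1 \<Longrightarrow> x1 \<le> x2 \<Longrightarrow> phi P t x1 y \<le> phi P t x2 y"
    and "\<And>x1 x2 y. 0 \<le> x1 \<Longrightarrow> x1 \<le> x2 \<Longrightarrow> phib P t x1 y \<le> phib P t x2 y"
    and "\<And>x y1 y2. 0 \<le> x \<Longrightarrow> y1 \<le> y2 \<Longrightarrow> phi P t x y1 \<le> phi P t x y2"
    and "\<And>y1 y2. y1 \<le> y2 \<Longrightarrow> phi P t (theta P) y1 \<le> phib P t (theta P) y2"
  using assms unfolding phi_props_def by simp_all

lemma psi_propsD:
  assumes "psi_props t"
  shows "\<And>x y. 0 \<le> x \<Longrightarrow> gam P t * x \<le> psi P t x y"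
    and "\<And>x y. 0 \<le> x \<Longrightarrow> gam P t * x \<le> psib P t x y"
    and "\<And>x1 x2 y. 0 \<le> x1 \<Longrightarrow> x1 \<le> x2 \<Longrightarrow> psi P t x1 y \<le> psi P t x2 y"
    and "\<And>x1 x2 y. 0 \<le> x1 \<Longrightarrow> x1 \<le> x2 \<Longrightarrow> psib P t x1 y \<le> psib P t x2 y"
    and "\<And>x y1 y2. 0 \<le> x \<Longrightarrow> y1 \<le> y2 \<Longrightarrow> psi P t x y1 \<le> psi P t x y2"
    and "\<And>y1 y2. y1 \<le> y2 \<Longrightarrow> psi P t (theta P) y1 \<le> psib P t (theta P) y2"
  using assms unfolding psi_props_def by simp_all

lemma phi_props_last: "phi_props (Hor P - 1)"
proof -
  have "Hor P - 1 < Hor P" using model by (simp add: model_ok_def)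
  moreover have "phi P (Hor P - 1) x y = (if y < sf P (Hor P - 1) then 0 else gam P (Hor P - 1) * x)"
    and "phib P (Hor P - 1) x y = (if y < sf P (Hor P - 1) then 0 else gam P (Hor P - 1) * x)"
    for x y
    by (subst phi.simps phib.simps, simp)+
  ultimately show ?thesis
    unfolding phi_props_def using gam_nonneg theta_pos by (auto simp: mult_left_mono)
qed

lemma psi_props_last: "psi_props (Hor P - 1)"
proof -
  have "Hor P - 1 < Hor P" using model by (simp add: model_ok_def)
  then show ?thesis
    unfolding psi_props_def using gam_nonneg theta_pos by (auto simp: mult_left_mono psi_def psib_def)
qed

lemma phi_props_if_psi_props:
  assumes last: "\<not> Hor P - 1 \<le> t" and "psi_props t"
  shows "phi_props t"
proof -
  note psi_ge = psi_propsD(1)[OF \<open>psi_props t\<close>]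
    and psib_ge = psi_propsD(2)[OF \<open>psi_props t\<close>]
    and psi_mono = psi_propsD(3)[OF \<open>psi_props t\<close>]
    and psib_mono = psi_propsD(4)[OF \<open>psi_props t\<close>]
    and psi_mono_y = psi_propsD(5)[OF \<open>psi_props t\<close>]
    and psi_le_psib = psi_propsD(6)[OF \<open>psi_props t\<close>]
  have gam: "0 \<le> gam P t" using last gam_nonneg by simp
  note phi = phi_eq[OF last] and phib = phib_eq[OF last]
  have psi_nonneg: "0 \<le> psi P t x y" and psib_nonneg: "0 \<le> psib P t x y" if "0 \<le> x" for x y
    using psi_ge[OF that, of y] psib_ge[OF that, of y] mult_nonneg_nonneg[OF gam that] by linarith+
  have phi_nonneg: "0 \<le> phi P t x y" if "0 \<le> x" for x y
    using psi_nonneg[of "min x (y - sf P t)" y] that by (simp add: phi)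
  have phib_nonneg: "0 \<le> phib P t x y" if "0 \<le> x" for x y
    using psib_nonneg[of "y - sf P t + theta P" y] psib_nonneg[OF that, of y] theta_pos that
    by (simp add: phib)
  have phi_mono: "phi P t x1 y \<le> phi P t x2 y" if "0 \<le> x1" "x1 \<le> x2" for x1 x2 y
    using that psi_mono[of "min x1 (y - sf P t)" "min x2 (y - sf P t)" y] by (simp add: phi)
  have phib_mono: "phib P t x1 y \<le> phib P t x2 y" if "0 \<le> x1" "x1 \<le> x2" for x1 x2 y
    using that theta_pos psib_mono[of x1 "y - sf P t + theta P" y] psib_mono[of x1 x2 y]
    by (simp add: phib)
  have phi_mono_y: "phi P t x y1 \<le> phi P t x y2" if "0 \<le> x" "y1 \<le> y2" for x y1 y2
  proof (cases "y1 < sf P t")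
    case True
    then show ?thesis using phi_nonneg[OF that(1), of y2] by (simp add: phi)
  next
    case False
    then have "psi P t (min x (y1 - sf P t)) y1 \<le> psi P t (min x (y2 - sf P t)) y1"
      using that by (intro psi_mono) auto
    also have "\<dots> \<le> psi P t (min x (y2 - sf P t)) y2"
      using that False by (intro psi_mono_y) auto
    finally show ?thesis using False that by (simp add: phi)
  qed
  have phi_le_phib: "phi P t (theta P) y1 \<le> phib P t (theta P) y2" if "y1 \<le> y2" for y1 y2
  proof (cases "y1 < sf P t")
    case True
    then show ?thesis using phib_nonneg[of "theta P" y2] theta_pos by (simp add: phi)
  next
    case False
    then have "phi P t (theta P) y1 \<le> psi P t (theta P) y1"
      using theta_pos by (simp add: phi psi_mono)
    also have "\<dots> \<le> psib P t (theta P) y2" using that by (rule psi_le_psib)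
    also have "\<dots> \<le> phib P t (theta P) y2"
      using False that theta_pos psib_mono[of "theta P" "y2 - sf P t + theta P" y2]
      by (simp add: phib)
    finally show ?thesis .
  qed
  show ?thesis
    unfolding phi_props_def
    by (simp add: phi_nonneg phib_nonneg phi_mono phib_mono phi_mono_y phi_le_phib)
qed

lemma psi_props_if_phi_props:
  assumes last: "\<not> Hor P - 1 \<le> t" and "phi_props (Suc t)"
  shows "psi_props t"
proof -
  note phi_nonneg = phi_propsD(1)[OF \<open>phi_props (Suc t)\<close>]
    and phib_nonneg = phi_propsD(2)[OF \<open>phi_props (Suc t)\<close>]
    and phi_mono = phi_propsD(3)[OF \<open>phi_props (Suc t)\<close>]
    and phib_mono = phi_propsD(4)[OF \<open>phi_props (Suc t)\<close>]
    and phi_mono_y = phi_propsD(5)[OF \<open>phi_props (Suc t)\<close>]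
    and phi_le_phib = phi_propsD(6)[OF \<open>phi_props (Suc t)\<close>]
  have t: "t < Hor P" and gam: "0 \<le> gam P t" using last gam_nonneg by auto
  have psi: "psi P t = psi_step P t (phi P (Suc t))"
    and psib: "psib P t = psi_step P t (phib P (Suc t))"
    using last by (simp_all add: psi_def psib_def fun_eq_iff)
  have psi_ge: "gam P t * x \<le> psi P t x y" if "0 \<le> x" for x y
    unfolding psi using phi_below t phi_nonneg[OF that] by (rule psi_step_ge)
  have psib_ge: "gam P t * x \<le> psib P t x y" if "0 \<le> x" for x y
    unfolding psib using phib_below t phib_nonneg[OF that] by (rule psi_step_ge)
  have psi_mono: "psi P t x1 y \<le> psi P t x2 y" if "0 \<le> x1" "x1 \<le> x2" for x1 x2 y
    unfolding psi
    by (rule psi_step_mono[where g = "phi P (Suc t)" and h = "phi P (Suc t)"])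
       (use that gam t in \<open>auto intro: phi_below phi_mono mult_left_mono\<close>)
  have psib_mono: "psib P t x1 y \<le> psib P t x2 y" if "0 \<le> x1" "x1 \<le> x2" for x1 x2 y
    unfolding psib
    by (rule psi_step_mono[where g = "phib P (Suc t)" and h = "phib P (Suc t)"])
       (use that gam t in \<open>auto intro: phib_below phib_mono mult_left_mono\<close>)
  have psi_mono_y: "psi P t x y1 \<le> psi P t x y2" if "0 \<le> x" "y1 \<le> y2" for x y1 y2
    unfolding psi
    by (rule psi_step_mono[where g = "phi P (Suc t)" and h = "phi P (Suc t)"])
       (use that t in \<open>auto intro: phi_below phi_mono_y\<close>)
  have psi_le_psib: "psi P t (theta P) y1 \<le> psib P t (theta P) y2" if "y1 \<le> y2" for y1 y2
    unfolding psi psib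
    by (rule psi_step_mono[where g = "phi P (Suc t)" and h = "phib P (Suc t)"])
       (use that t in \<open>auto intro: phi_below phib_below phi_le_phib\<close>)
  show ?thesis
    unfolding psi_props_def
    by (simp add: psi_ge psib_ge psi_mono psib_mono psi_mono_y psi_le_psib)
qed

lemma phi_psi_props: "t \<le> Hor P - 1 \<Longrightarrow> phi_props t \<and> psi_props t"
proof (induction t rule: inc_induct)
  case base
  show ?case using phi_props_last psi_props_last by simp
next
  case (step t)
  then have "\<not> Hor P - 1 \<le> t" by simp
  then show ?case
    using step.IH phi_props_if_psi_props psi_props_if_phi_props by blast
qed

lemma psi_props_before_horizon: "t < Hor P \<Longrightarrow> psi_props t"
  using phi_psi_props[of t] by simp

lemma psi_ge_gam: "t < Hor P \<Longrightarrow> 0 \<le> x \<Longrightarrow> gam P t * x \<le> psi P t x y"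
  by (rule psi_propsD(1)[OF psi_props_before_horizon])

lemma psib_ge_gam: "t < Hor P \<Longrightarrow> 0 \<le> x \<Longrightarrow> gam P t * x \<le> psib P t x y"
  by (rule psi_propsD(2)[OF psi_props_before_horizon])

lemma psib_theta_nonneg: "t < Hor P \<Longrightarrow> 0 \<le> psib P t (theta P) y"
  using psib_ge_gam[of t "theta P" y] gam_nonneg[of t] theta_pos
  by (smt (verit) mult_nonneg_nonneg)

lemma psi_mono_right: "t < Hor P \<Longrightarrow> 0 \<le> x \<Longrightarrow> y1 \<le> y2 \<Longrightarrow> psi P t x y1 \<le> psi P t x y2"
  by (rule psi_propsD(5)[OF psi_props_before_horizon])

lemma psi_le_psib:
  "t < Hor P \<Longrightarrow> y1 \<le> y2 \<Longrightarrow> psi P t (theta P) y1 \<le> psib P t (theta P) y2"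
  by (rule psi_propsD(6)[OF psi_props_before_horizon])

lemma omegab_eq:
  assumes "\<not> Hor P - 1 \<le> t"
  shows "omegab P t x =
    (if x \<le> SU P t then psib P t (theta P) (SU P t) + omega_step P t (omegab P (Suc t)) (SU P t)
     else max (psib P t (theta P) (SU P t) + omega_step P t (omegab P (Suc t)) (SU P t))
              (omega_step P t (omegab P (Suc t)) x))"
  using assms by (subst omegab.simps) (simp add: Let_def)

lemma omega_step_nonneg:
  assumes t: "t < Hor P" and "\<And>y. 0 \<le> g y" "mono g"
  shows "0 \<le> omega_step P t g x"
  using psi_ge_gam[OF t, of "theta P" x] grid_expect_nonneg[OF assms, of x] theta_pos disc_pos
  by (simp add: omega_step_eq)

lemma omega_step_mono:
  assumes t: "t < Hor P" and "\<And>y. 0 \<le> g y" "mono g" and "x \<le> x'"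
  shows "omega_step P t g x \<le> omega_step P t g x'"
proof -
  have "disc P * grid_expect t g x \<le> disc P * grid_expect t g x'"
    using grid_expect_mono[OF assms] disc_pos by simp
  then show ?thesis
    using psi_mono_right[OF t _ \<open>x \<le> x'\<close>, of "theta P"] theta_pos by (simp add: omega_step_eq)
qed

lemma omegab_nonneg_mono: "t \<le> Hor P - 1 \<Longrightarrow> (\<forall>x. 0 \<le> omegab P t x) \<and> mono (omegab P t)"
proof (induction t rule: inc_induct)
  case base
  have "omegab P (Hor P - 1) x = 0" for x by (subst omegab.simps) simp
  then show ?case by (simp add: mono_def)
next
  case (step t)
  then have last: "\<not> Hor P - 1 \<le> t" and t: "t < Hor P" by auto
  have next_nonneg: "\<And>y. 0 \<le> omegab P (Suc t) y" and next_mono: "mono (omegab P (Suc t))"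
    using step.IH by auto
  note om_nonneg = omega_step_nonneg[OF t next_nonneg next_mono]
    and om_mono = omega_step_mono[OF t next_nonneg next_mono]
  note eta_nonneg = psib_theta_nonneg[OF t, of "SU P t"]
  show ?case
  proof (intro conjI allI monoI)
    show "0 \<le> omegab P t x" for x
      using eta_nonneg om_nonneg by (auto simp: omegab_eq[OF last] le_max_iff_disj)
    show "omegab P t a \<le> omegab P t b" if "a \<le> b" for a b
      using that om_mono[of a b] om_mono[of "SU P t" b]
      by (auto simp: omegab_eq[OF last] le_max_iff_disj max_def)
  qed
qed

text \<open>Shifting by \<theta> absorbs the expectation, and passing from \<psi> to \<psi>-bar absorbs the move
  from y to any y' \<ge> y.\<close>
lemma omega_step_le:
  assumes t: "t + 2 \<le> Hor P" and "y \<le> y'"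
  shows "omega_step P t (omegab P (Suc t)) y
    \<le> psib P t (theta P) y' - gam P t * theta P + disc P * omegab P (Suc t) (theta P + y')"
proof -
  have t': "t < Hor P" using t by simp
  have next_nonneg: "\<And>y. 0 \<le> omegab P (Suc t) y" and next_mono: "mono (omegab P (Suc t))"
    using omegab_nonneg_mono[of "Suc t"] t by auto
  have "grid_expect t (omegab P (Suc t)) y \<le> omegab P (Suc t) (y + theta P)"
    by (rule grid_expect_le_shift[OF t' next_nonneg next_mono])
  also have "\<dots> \<le> omegab P (Suc t) (theta P + y')"
    using \<open>y \<le> y'\<close> by (intro monoD[OF next_mono]) simp
  finally have "disc P * grid_expect t (omegab P (Suc t)) y \<le> disc P * omegab P (Suc t) (theta P + y')"
    using disc_pos by simp
  then show ?thesis
    using psi_le_psib[OF t' \<open>y \<le> y'\<close>] by (simp add: omega_step_eq)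
qed

end

theorem lemma4p8:
  fixes P :: invmodel and t :: nat and x :: real
  assumes "model_ok P"
    and "t + 2 \<le> Hor P"
  shows "omegab P t x \<le> psib P t (theta P) (SU P t) + psib P t (theta P) (max x (SU P t))
           - gam P t * theta P + disc P * omegab P (Suc t) (theta P + max x (SU P t))"
proof -
  have last: "\<not> Hor P - 1 \<le> t" and t: "t < Hor P" using assms(2) by auto
  note bound = omega_step_le[OF assms]
  show ?thesis
    using psib_theta_nonneg[OF assms(1) t, of "SU P t"]
      bound[of "SU P t" "SU P t"] bound[of x x] bound[of "SU P t" x]
    by (cases "x \<le> SU P t") (auto simp: omegab_eq[OF assms(1) last] max_def)
qed

end
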